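(* Let $\mathcal D$ be a finite domain. (i) The law of $\sigma_r$ under $\mu_{\mathcal D}$ is $\nu_{\mathcal D}(\sigma_r)=\frac1{Z_{\mathcal D}}2^{k(\theta(\sigma_r))}$ for $\sigma_r\in\{+,-\}^{F(\mathcal D)}$, where $Z_{\mathcal D}$ is a normalising constant. (ii) Conditionally on $\sigma_r$, the law of $\sigma_b$ under $\mu_{\mathcal D}$ is obtained by assigning to each connected component of $\theta(\sigma_r)$ a spin in $\{+,-\}$ uniformly and independently, and giving all faces of that component this blue spin.
   Context: $\mathbb H$ is the hexagonal lattice and $\mathbb T$ the dual triangular lattice (vertices = faces of $\mathbb H$). A domain is a subgraph $\mathcal D$ of $\mathbb H$ without isolated vertices for which there exists a self-avoiding polygon $\partial_E\mathcal D$ such that $E(\mathcal D)$ is the set of edges in the bounded component of $\mathbb H\setminus\partial_E\mathcal D$; $F(\mathcal D)$ is the set of faces adjacent to an edge of $\mathcal D$, and $\mathcal D^*$ is the subgraph of $\mathbb T$ induced by $F(\mathcal D)$. A pair $(\sigma_r,\sigma_b)\in\{+,-\}^{F(\mathcal D)}\times\{+,-\}^{F(\mathcal D)}$ is coherent if for all adjacent faces $u,v\in F(\mathcal D)$, $\sigma_r(u)=\sigma_r(v)$ or $\sigma_b(u)=\sigma_b(v)$; $\mu_{\mathcal D}$ is uniform on coherent pairs and $\nu_{\mathcal D}$ is the law of $\sigma_r$. For $\sigma\in\{+,-\}^{F(\mathcal D)}$, $\theta(\sigma)$ is the spanning subgraph of $\mathcal D^*$ with edge set $\{uv\in E(\mathcal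 D^* ):\sigma(u)\ne\sigma(v)\}$, and $k(\theta(\sigma))$ is its number of connected components (isolated vertices counted). *)

theory Defs
  imports "HOL-Probability.Probability_Mass_Function" "HOL-Library.FuncSet"
begin

text \<open>Faces of the hexagonal lattice H = vertices of the triangular lattice T,
  coordinatised as Z^2 (basis vectors 1 and e^(i pi/3)).\<close>
type_synonym face = "int \<times> int"

definition tadj :: "face \<Rightarrow> face \<Rightarrow> bool" where
  "tadj u v \<longleftrightarrow> (fst v - fst u, snd v - snd u) \<in>
     {(1,0), (-1,0), (0,1), (0,-1), (1,-1), (-1,1)}"

text \<open>Vertices of H = triangles of T (sets of three mutually adjacent faces).\<close>
definition is_hvertex :: "face set \<Rightarrow> bool" where
  "is_hvertex t \<longleftrightarrow> (\<exists>a b c. t = {a, b, c} \<and> tadj a b \<and> tadj b c \<and> tadj a c)"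

text \<open>Two vertices of H are adjacent iff their triangles share an edge of T.
  An edge of H is identified with its dual edge {u,v} of T (the two faces it separates).\<close>
definition hadj :: "face set \<Rightarrow> face set \<Rightarrow> bool" where
  "hadj t s \<longleftrightarrow> is_hvertex t \<and> is_hvertex s \<and> card (t \<inter> s) = 2"

definition sa_polygon :: "face set list \<Rightarrow> bool" where
  "sa_polygon ps \<longleftrightarrow> length ps \<ge> 3 \<and> distinct ps \<and>
     (\<forall>i < length ps. hadj (ps ! i) (ps ! ((i + 1) mod length ps)))"

definition poly_edges :: "face set list \<Rightarrow> face set set" where
  "poly_edges ps = {ps ! i \<inter> ps ! ((i + 1) mod length ps) | i. i < length ps}"

definition cut_rel :: "face set list \<Rightarrow> (face \<times> face) set" where
  "cut_rel ps = {(u, v). tadj u v \<and> {u, v} \<notin> poly_edges ps}"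

text \<open>Faces lying in the bounded component of the plane minus the polygon:
  those whose component in T minus the crossing edges is finite.\<close>
definition inside :: "face set list \<Rightarrow> face set" where
  "inside ps = {u. finite ((cut_rel ps)\<^sup>* `` {u})}"

definition dom_edges :: "face set list \<Rightarrow> face set set" where
  "dom_edges ps = {{u, v} | u v. tadj u v \<and> {u, v} \<notin> poly_edges ps \<and>
                    u \<in> inside ps \<and> v \<in> inside ps}"

text \<open>A domain, described by its edge set (it has no isolated vertices, so it is
  determined by its edges).\<close>
definition is_domain :: "face set set \<Rightarrow> bool" where
  "is_domain ED \<longleftrightarrow> (\<exists>ps. sa_polygon ps \<and> ED = dom_edges ps)"

definition dom_faces :: "face set set \<Rightarrow> face set" where
  "dom_faces ED = \<Union> ED"

text \<open>Spin configurations on F (True = +, False = -).\<close>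
definition spins :: "face set \<Rightarrow> (face \<Rightarrow> bool) set" where
  "spins F = F \<rightarrow>\<^sub>E (UNIV :: bool set)"

definition coherent :: "face set \<Rightarrow> (face \<Rightarrow> bool) \<Rightarrow> (face \<Rightarrow> bool) \<Rightarrow> bool" where
  "coherent F sr sb \<longleftrightarrow> (\<forall>u\<in>F. \<forall>v\<in>F. tadj u v \<longrightarrow> sr u = sr v \<or> sb u = sb v)"

definition coherent_pairs :: "face set \<Rightarrow> ((face \<Rightarrow> bool) \<times> (face \<Rightarrow> bool)) set" where
  "coherent_pairs F = {(sr, sb). sr \<in> spins F \<and> sb \<in> spins F \<and> coherent F sr sb}"

definition mu :: "face set set \<Rightarrow> ((face \<Rightarrow> bool) \<times> (face \<Rightarrow> bool)) pmf" where
  "mu ED = pmf_of_set (coherent_pairs (dom_faces ED))"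

definition nu :: "face set set \<Rightarrow> (face \<Rightarrow> bool) pmf" where
  "nu ED = map_pmf fst (mu ED)"

definition theta_rel :: "face set \<Rightarrow> (face \<Rightarrow> bool) \<Rightarrow> (face \<times> face) set" where
  "theta_rel F s = {(u, v). u \<in> F \<and> v \<in> F \<and> tadj u v \<and> s u \<noteq> s v}"

text \<open>Connected components of theta(sigma) (spanning subgraph on F), as sets of faces.\<close>
definition theta_comps :: "face set \<Rightarrow> (face \<Rightarrow> bool) \<Rightarrow> face set set" where
  "theta_comps F s = F // ((theta_rel F s)\<^sup>*)"

definition k_theta :: "face set \<Rightarrow> (face \<Rightarrow> bool) \<Rightarrow> nat" where
  "k_theta F s = card (theta_comps F s)"

definition blue_law :: "face set \<Rightarrow> (face \<Rightarrow> bool) \<Rightarrow> (face \<Rightarrow> bool) pmf" where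
  "blue_law F sr =
     map_pmf (\<lambda>\<tau>. \<lambda>u\<in>F. \<tau> ((theta_rel F sr)\<^sup>* `` {u}))
       (pmf_of_set (theta_comps F sr \<rightarrow>\<^sub>E (UNIV :: bool set)))"

end

theory Submission
  imports Defs
begin

text \<open>Coherence says exactly that the blue spins agree across every edge of the graph
  theta(sigma_r) of red disagreements. Hence, for fixed sigma_r, the blue configurations
  compatible with it are the functions constant on the components of theta(sigma_r); there
  are 2^k(theta(sigma_r)) of them. So the marginal of the uniform measure on coherent pairs is
  proportional to 2^k, and its conditional law of sigma_b is uniform on these functions,
  which is the law of independent fair spins on the components.\<close>

lemma equiv_rtrancl: "sym R \<Longrightarrow> equiv UNIV (R\<^sup>*)"
  by (simp add: equivI refl_rtrancl sym_rtrancl trans_rtrancl)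

lemma rtrancl_invariant:
  assumes "(u, w) \<in> R\<^sup>*" and "\<forall>(a, b) \<in> R. f a = f b"
  shows "f u = f w"
  using assms by induction auto

lemma bij_betw_quotient_PiE:
  fixes R :: "'a rel" and B :: "'b set"
  assumes R_in: "R \<subseteq> F \<times> F" and "sym R"
  shows "bij_betw (\<lambda>\<tau>. \<lambda>u\<in>F. \<tau> (R\<^sup>* `` {u})) (F // R\<^sup>* \<rightarrow>\<^sub>E B)
           {f \<in> F \<rightarrow>\<^sub>E B. \<forall>(a, b) \<in> R. f a = f b}"
    (is "bij_betw ?lift _ _")
proof (rule bij_betwI')
  fix \<tau> \<tau>' assume \<tau>: "\<tau> \<in> F // R\<^sup>* \<rightarrow>\<^sub>E B" and \<tau>': "\<tau>' \<in> F // R\<^sup>* \<rightarrow>\<^sub>E B"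
  show "?lift \<tau> = ?lift \<tau>' \<longleftrightarrow> \<tau> = \<tau>'"
  proof
    assume lift_eq: "?lift \<tau> = ?lift \<tau>'"
    show "\<tau> = \<tau>'"
    proof (rule extensionalityI)
      show "\<tau> \<in> extensional (F // R\<^sup>*)" "\<tau>' \<in> extensional (F // R\<^sup>*)"
        using \<tau> \<tau>' by (simp_all add: PiE_iff)
    next
      fix C assume "C \<in> F // R\<^sup>*"
      then obtain u where "u \<in> F" "C = R\<^sup>* `` {u}" by (rule quotientE)
      then show "\<tau> C = \<tau>' C" using fun_cong[OF lift_eq, of u] by simp
    qed
  qed simp
next
  fix \<tau> assume \<tau>: "\<tau> \<in> F // R\<^sup>* \<rightarrow>\<^sub>E B"
  have "?lift \<tau> a = ?lift \<tau> b" if "(a, b) \<in> R" for a b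
  proof -
    have "R\<^sup>* `` {a} = R\<^sup>* `` {b}"
      using that equiv_class_eq_iff[OF equiv_rtrancl[OF \<open>sym R\<close>]] by blast
    then show ?thesis using that R_in by auto
  qed
  then show "?lift \<tau> \<in> {f \<in> F \<rightarrow>\<^sub>E B. \<forall>(a, b) \<in> R. f a = f b}"
    using \<tau> by (auto intro: quotientI)
next
  fix f assume "f \<in> {f \<in> F \<rightarrow>\<^sub>E B. \<forall>(a, b) \<in> R. f a = f b}"
  then have f: "f \<in> F \<rightarrow>\<^sub>E B" and f_inv: "\<forall>(a, b) \<in> R. f a = f b" by auto
  have f_class: "f (SOME w. w \<in> R\<^sup>* `` {u}) = f u" for u
  proof -
    have "(SOME w. w \<in> R\<^sup>* `` {u}) \<in> R\<^sup>* `` {u}" by (rule someI[of _ u]) simp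
    then show ?thesis using rtrancl_invariant f_inv by (metis Image_singleton_iff)
  qed
  define \<tau> where "\<tau> = (\<lambda>C\<in>F // R\<^sup>*. f (SOME w. w \<in> C))"
  have "\<tau> \<in> F // R\<^sup>* \<rightarrow>\<^sub>E B"
    using f f_class unfolding \<tau>_def by (auto elim!: quotientE)
  moreover have "f = ?lift \<tau>"
  proof (rule extensionalityI)
    show "f \<in> extensional F" using f by (simp add: PiE_iff)
  qed (use f_class in \<open>auto simp: \<tau>_def intro: quotientI\<close>)
  ultimately show "\<exists>\<tau> \<in> F // R\<^sup>* \<rightarrow>\<^sub>E B. f = ?lift \<tau>" by blast
qed

lemma cond_pmf_of_set:
  assumes "finite S" and "S \<inter> A \<noteq> {}"
  shows "cond_pmf (pmf_of_set S) A = pmf_of_set (S \<inter> A)"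
proof (rule pmf_eqI)
  fix x
  have S: "S \<noteq> {}" using assms(2) by blast
  then have "set_pmf (pmf_of_set S) \<inter> A \<noteq> {}" and "card (S \<inter> A) > 0"
    using assms by (auto simp: card_gt_0_iff)
  then show "pmf (cond_pmf (pmf_of_set S) A) x = pmf (pmf_of_set (S \<inter> A)) x"
    using assms S by (simp add: pmf_cond measure_pmf_of_set indicator_def)
qed

lemma pmf_map_fst_pmf_of_set:
  assumes "finite S" and "S \<noteq> {}"
  shows "pmf (map_pmf fst (pmf_of_set S)) x = card {y. (x, y) \<in> S} / card S"
proof -
  have "bij_betw (Pair x) {y. (x, y) \<in> S} (S \<inter> fst -` {x})"
    by (auto simp: bij_betw_def inj_on_def image_iff)
  then have "card (S \<inter> fst -` {x}) = card {y. (x, y) \<in> S}"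
    by (simp add: bij_betw_same_card)
  then show ?thesis
    using assms by (simp add: pmf_map measure_pmf_of_set)
qed

lemma map_snd_cond_pmf_of_set:
  assumes "finite S" and "(x, y) \<in> S"
  shows "map_pmf snd (cond_pmf (pmf_of_set S) {p. fst p = x}) = pmf_of_set {y. (x, y) \<in> S}"
proof -
  let ?fibre = "S \<inter> {p. fst p = x}"
  have "cond_pmf (pmf_of_set S) {p. fst p = x} = pmf_of_set ?fibre"
    using assms by (intro cond_pmf_of_set) auto
  moreover have "map_pmf snd (pmf_of_set ?fibre) = pmf_of_set (snd ` ?fibre)"
    using assms by (intro map_pmf_of_set_inj) (auto simp: inj_on_def)
  moreover have "snd ` ?fibre = {y. (x, y) \<in> S}"
    by force
  ultimately show ?thesis by simp
qed

lemma sym_theta_rel: "sym (theta_rel F s)"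
  unfolding sym_def theta_rel_def tadj_def by auto

lemma coherent_fibre_eq:
  "sr \<in> spins F \<Longrightarrow> {sb. (sr, sb) \<in> coherent_pairs F}
     = {f \<in> F \<rightarrow>\<^sub>E UNIV. \<forall>(a, b) \<in> theta_rel F sr. f a = f b}"
  unfolding coherent_pairs_def spins_def coherent_def theta_rel_def by fastforce

lemma bij_betw_theta_comps_coherent_fibre:
  assumes "sr \<in> spins F"
  shows "bij_betw (\<lambda>\<tau>. \<lambda>u\<in>F. \<tau> ((theta_rel F sr)\<^sup>* `` {u}))
           (theta_comps F sr \<rightarrow>\<^sub>E UNIV) {sb. (sr, sb) \<in> coherent_pairs F}"
  unfolding coherent_fibre_eq[OF assms] theta_comps_def
  by (rule bij_betw_quotient_PiE[OF _ sym_theta_rel]) (auto simp: theta_rel_def)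

lemma finite_theta_comps: "finite F \<Longrightarrow> finite (theta_comps F s)"
  unfolding theta_comps_def quotient_def by simp

lemma card_coherent_fibre:
  assumes "finite F" and "sr \<in> spins F"
  shows "card {sb. (sr, sb) \<in> coherent_pairs F} = 2 ^ k_theta F sr"
  using bij_betw_same_card[OF bij_betw_theta_comps_coherent_fibre[OF assms(2)]]
    finite_theta_comps[OF assms(1)]
  by (simp add: card_funcsetE k_theta_def)

lemma blue_law_eq_pmf_of_set:
  assumes "finite F" and "sr \<in> spins F"
  shows "blue_law F sr = pmf_of_set {sb. (sr, sb) \<in> coherent_pairs F}"
proof -
  note bij = bij_betw_theta_comps_coherent_fibre[OF assms(2)]
  have "blue_law F sr
      = pmf_of_set ((\<lambda>\<tau>. \<lambda>u\<in>F. \<tau> ((theta_rel F sr)\<^sup>* `` {u})) ` (theta_comps F sr \<rightarrow>\<^sub>E UNIV))"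
    unfolding blue_law_def using bij finite_theta_comps[OF assms(1)]
    by (intro map_pmf_of_set_inj) (auto simp: bij_betw_def PiE_eq_empty_iff finite_PiE)
  then show ?thesis using bij by (simp add: bij_betw_def)
qed

lemma finite_dom_faces:
  assumes "is_domain ED" and "finite ED"
  shows "finite (dom_faces ED)"
proof -
  obtain ps where "ED = dom_edges ps" using assms(1) unfolding is_domain_def by blast
  then have "\<forall>e \<in> ED. finite e" unfolding dom_edges_def by auto
  then show ?thesis using assms(2) unfolding dom_faces_def by blast
qed

lemma finite_coherent_pairs: "finite F \<Longrightarrow> finite (coherent_pairs F)"
  by (rule finite_subset[of _ "spins F \<times> spins F"])
     (auto simp: coherent_pairs_def spins_def finite_PiE)

lemma constant_blue_coherent: "sr \<in> spins F \<Longrightarrow> (sr, \<lambda>u\<in>F. c) \<in> coherent_pairs F"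
  unfolding coherent_pairs_def spins_def coherent_def by auto

theorem proposition2p7:
  fixes ED :: "face set set"
  assumes "is_domain ED" and "finite ED"
  shows "(\<exists>Z > 0. \<forall>sr \<in> spins (dom_faces ED).
            pmf (nu ED) sr = 2 ^ k_theta (dom_faces ED) sr / Z)
       \<and> (\<forall>sr \<in> spins (dom_faces ED).
            map_pmf snd (cond_pmf (mu ED) {p. fst p = sr}) = blue_law (dom_faces ED) sr)"
proof -
  define F where "F = dom_faces ED"
  have fin_F: "finite F" unfolding F_def using assms by (rule finite_dom_faces)
  have fin: "finite (coherent_pairs F)" using fin_F by (rule finite_coherent_pairs)
  have nonempty: "coherent_pairs F \<noteq> {}"
    using constant_blue_coherent[of "\<lambda>u\<in>F. True" F] by (auto simp: spins_def)
  have "pmf (nu ED) sr = 2 ^ k_theta F sr / card (coherent_pairs F)" if "sr \<in> spins F" for sr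
    unfolding nu_def mu_def F_def[symmetric]
    using pmf_map_fst_pmf_of_set[OF fin nonempty] card_coherent_fibre[OF fin_F that] by simp
  moreover have "map_pmf snd (cond_pmf (mu ED) {p. fst p = sr}) = blue_law F sr"
    if "sr \<in> spins F" for sr
    unfolding mu_def F_def[symmetric] blue_law_eq_pmf_of_set[OF fin_F that]
    using map_snd_cond_pmf_of_set[OF fin constant_blue_coherent[OF that]] .
  moreover have "card (coherent_pairs F) > 0" using fin nonempty by (simp add: card_gt_0_iff)
  ultimately show ?thesis
    unfolding F_def[symmetric] by (intro conjI exI[of _ "real (card (coherent_pairs F))"]) auto
qed

end
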